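(* Let $r\ge 1$ and let $G$ be a finite simple undirected graph on $n\ge r+1$ vertices with adjacency eigenvalues $\lambda_1(G)\ge\cdots\ge\lambda_n(G)$. Then \[ \lambda_{r+1}(G)\ \le\ \frac{\beta_r}{2r}\,n-1 . \]
   Context: For integers $N\ge r\ge 1$, let $\mathcal P_r(N)=\{Q\in\mathbb R^{N\times N}: Q^2=Q,\ Q^T=Q,\ \operatorname{rank}Q=r\}$ be the set of rank-$r$ orthogonal projections. Define \[ \beta_r(N)=\frac1N\max_{Q\in\mathcal P_r(N)}\sum_{i,j=1}^N |q_{ij}|,\qquad \beta_r=\sup_{N\ge r}\beta_r(N), \] where $Q=(q_{ij})$. Eigenvalues of a graph are those of its adjacency matrix, listed in nonincreasing order. *)

theory Defs
  imports "Jordan_Normal_Form.Char_Poly" "Jordan_Normal_Form.DL_Rank"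
    "HOL-Computational_Algebra.Polynomial"
begin

text \<open>Finite simple undirected graph on vertex set {0..<n}, given by an edge relation E
  (only its restriction to {0..<n} matters).\<close>
definition simple_graph :: "nat \<Rightarrow> (nat \<Rightarrow> nat \<Rightarrow> bool) \<Rightarrow> bool" where
  "simple_graph n E \<longleftrightarrow> (\<forall>i<n. \<forall>j<n. E i j = E j i) \<and> (\<forall>i<n. \<not> E i i)"

definition adj_mat :: "nat \<Rightarrow> (nat \<Rightarrow> nat \<Rightarrow> bool) \<Rightarrow> real mat" where
  "adj_mat n E = mat n n (\<lambda>(i,j). if E i j then 1 else 0)"

text \<open>Eigenvalues (roots of the characteristic polynomial, with multiplicity), listed in
  nonincreasing order; entry k (0-based) is lambda_(k+1).\<close>
definition eigenvalues_desc :: "real mat \<Rightarrow> real list" where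
  "eigenvalues_desc A = rev (sorted_list_of_multiset (proots (char_poly A)))"

definition orth_proj :: "nat \<Rightarrow> nat \<Rightarrow> real mat \<Rightarrow> bool" where
  "orth_proj N r Q \<longleftrightarrow> Q \<in> carrier_mat N N \<and> Q * Q = Q \<and> transpose_mat Q = Q
     \<and> vec_space.rank N Q = r"

definition beta_N :: "nat \<Rightarrow> nat \<Rightarrow> real" where
  "beta_N r N = (1 / real N) *
     Sup {(\<Sum>i<N. \<Sum>j<N. \<bar>Q $$ (i,j)\<bar>) | Q. orth_proj N r Q}"

definition beta :: "nat \<Rightarrow> real" where
  "beta r = Sup {beta_N r N | N. N \<ge> r}"

end

theory Submission
  imports Defs "Jordan_Normal_Form.Schur_Decomposition"
begin

(* Let A be the adjacency matrix and mu = lambda_(r+1)(A). The span of the top r + 1 orthonormal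
   eigenvectors of A meets the orthogonal complement of the all-ones vector j in a subspace of
   dimension at least r; a Householder reflection inside that span yields an orthonormal basis
   x_1, ..., x_r of such a subspace. The projection Q = sum_k x_k x_k^T has rank r, trace r,
   j^T Q j = 0 and <A, Q> >= r mu. As 2A - J + 2I is a sign matrix (the graph has no loops),
   2 r mu + 2 r <= <2A - J + 2I, Q> <= sum |q_ij| <= beta_r n.
   That beta_r is a genuine (finite) supremum follows from writing every rank-r projection as
   sum_k v_k v_k^T with orthonormal v_k, which gives sum |q_ij| <= r N. *)

definition orthonormal_mat :: "nat \<Rightarrow> real mat \<Rightarrow> bool" where
  "orthonormal_mat n U \<longleftrightarrow> U \<in> carrier_mat n n \<and> transpose_mat U * U = 1\<^sub>m n"

lemma orthonormal_mat_right_inverse: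
  assumes "orthonormal_mat n U"
  shows "U * transpose_mat U = 1\<^sub>m n"
  using assms mat_mult_left_right_inverse[of "transpose_mat U" n U]
  by (auto simp: orthonormal_mat_def)

lemma orthonormal_mat_cols:
  assumes "orthonormal_mat n U" "k < n" "l < n"
  shows "(\<Sum>i<n. U $$ (i,k) * U $$ (i,l)) = (if k = l then 1 else 0)"
proof -
  have U: "U \<in> carrier_mat n n" and "(transpose_mat U * U) $$ (k,l) = (if k = l then 1 else 0)"
    using assms by (auto simp: orthonormal_mat_def)
  then show ?thesis
    using assms by (simp add: scalar_prod_def lessThan_atLeast0 row_transpose col_def)
qed

lemma orthonormal_mat_rows:
  assumes "orthonormal_mat n U" "k < n" "l < n"
  shows "(\<Sum>i<n. U $$ (k,i) * U $$ (l,i)) = (if k = l then 1 else 0)"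
proof -
  have U: "U \<in> carrier_mat n n" and "(U * transpose_mat U) $$ (k,l) = (if k = l then 1 else 0)"
    using assms orthonormal_mat_right_inverse by (auto simp: orthonormal_mat_def)
  then show ?thesis
    using assms by (simp add: scalar_prod_def lessThan_atLeast0 col_transpose row_def)
qed

lemma congruence_mult:
  fixes U :: "'a :: comm_ring_1 mat"
  assumes U: "U \<in> carrier_mat n n" and V: "V \<in> carrier_mat n n" and A: "A \<in> carrier_mat n n"
  shows "transpose_mat (U * V) * A * (U * V) = transpose_mat V * (transpose_mat U * A * U) * V"
  unfolding transpose_mult[OF U V] using assms by (simp add: assoc_mult_mat[of _ n n _ n _ n])

lemma orthonormal_mat_mult:
  assumes U: "orthonormal_mat n U" and V: "orthonormal_mat n V"
  shows "orthonormal_mat n (U * V)"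
proof -
  have [simp]: "U \<in> carrier_mat n n" "V \<in> carrier_mat n n"
    "transpose_mat U \<in> carrier_mat n n" "transpose_mat V \<in> carrier_mat n n"
    using U V by (auto simp: orthonormal_mat_def)
  have [simp]: "U * V \<in> carrier_mat n n"
    using mult_carrier_mat[of U n n V n] by simp
  have "transpose_mat U * (U * V) = (transpose_mat U * U) * V"
    by (rule assoc_mult_mat[of _ n n _ n _ n, symmetric]) simp_all
  then have "transpose_mat U * (U * V) = V"
    using U left_mult_one_mat[of V n n] by (simp add: orthonormal_mat_def)
  then have "transpose_mat (U * V) * (U * V) = transpose_mat V * V"
    by (simp add: transpose_mult[of U n n V n] assoc_mult_mat[of _ n n _ n _ n])
  then show ?thesis
    using V by (simp add: orthonormal_mat_def)
qed

lemma orthonormal_mat_col_prod: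
  assumes "orthonormal_mat n U" "k < n" "l < n"
  shows "col U k \<bullet> col U l = (if k = l then 1 else 0)"
proof -
  have U: "U \<in> carrier_mat n n" and "(transpose_mat U * U) $$ (k,l) = (if k = l then 1 else 0)"
    using assms by (auto simp: orthonormal_mat_def)
  then show ?thesis
    using assms by (simp add: row_transpose)
qed

lemma orthonormal_congruence_char_poly:
  assumes W: "orthonormal_mat n W" and A: "A \<in> carrier_mat n n"
  shows "char_poly (transpose_mat W * A * W) = char_poly A"
proof -
  have Wc: "W \<in> carrier_mat n n" and WTW: "transpose_mat W * W = 1\<^sub>m n"
    using W by (auto simp: orthonormal_mat_def)
  have WWT: "W * transpose_mat W = 1\<^sub>m n"
    using orthonormal_mat_right_inverse[OF W] .
  have "W * (transpose_mat W * A * W) * transpose_mat W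
      = (W * transpose_mat W) * A * (W * transpose_mat W)"
    using Wc A by (simp add: assoc_mult_mat[of _ n n _ n _ n])
  also have "\<dots> = A"
    using A by (simp add: WWT)
  finally have "similar_mat_wit A (transpose_mat W * A * W) W (transpose_mat W)"
    using Wc A by (intro similar_mat_witI[OF WWT WTW]) auto
  then show ?thesis
    by (intro char_poly_similar[symmetric]) (auto simp: similar_mat_def)
qed

lemma congruence_entry:
  assumes U: "(U :: 'a :: comm_ring_1 mat) \<in> carrier_mat n m" and A: "A \<in> carrier_mat n n"
    and i: "i < m" and j: "j < m"
  shows "(transpose_mat U * A * U) $$ (i,j) = col U i \<bullet> (A *\<^sub>v col U j)"
proof -
  have "transpose_mat U * A * U = transpose_mat U * (A * U)"
    using U A by (intro assoc_mult_mat) auto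
  also have "\<dots> $$ (i,j) = row (transpose_mat U) i \<bullet> col (A * U) j"
    using U A i j by (intro index_mult_mat) auto
  finally show ?thesis
    using U i col_mult2[OF A U j] by (simp add: row_transpose)
qed

lemma congruence_diag_entry:
  assumes U: "(U :: 'a :: comm_ring_1 mat) \<in> carrier_mat n m" and A: "A \<in> carrier_mat n n" and k: "k < m"
  shows "(transpose_mat U * A * U) $$ (k,k) = (\<Sum>i<n. \<Sum>j<n. A $$ (i,j) * (U $$ (i,k) * U $$ (j,k)))"
  using congruence_entry[OF U A k k] U A k
  by (simp add: scalar_prod_def lessThan_atLeast0 mult_mat_vec_def row_def sum_distrib_left ac_simps)

section \<open>Spectral theorem for real symmetric matrices\<close>

lemma symmetric_scalar_prod:
  fixes A :: "'a :: comm_semiring_0 mat"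
  assumes A: "A \<in> carrier_mat n n" and sym: "transpose_mat A = A"
    and x: "x \<in> carrier_vec n" and y: "y \<in> carrier_vec n"
  shows "x \<bullet> (A *\<^sub>v y) = y \<bullet> (A *\<^sub>v x)"
  using transpose_vec_mult_scalar[OF A y x] comm_scalar_prod[of "A *\<^sub>v x" n y] A x y sym by simp

lemma real_scalar_prod_self_pos:
  fixes v :: "real vec"
  assumes "v \<in> carrier_vec n" "v \<noteq> 0\<^sub>v n"
  shows "0 < v \<bullet> v"
  using conjugate_square_greater_0_vec[OF assms(1)] assms(2) by simp

lemma symmetric_eigenvalue_real:
  fixes A :: "real mat"
  assumes A: "A \<in> carrier_mat n n" and sym: "transpose_mat A = A"
    and ev: "eigenvalue (map_mat complex_of_real A) a"
  shows "a \<in> \<real>"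
proof -
  define B where "B = map_mat complex_of_real A"
  have B: "B \<in> carrier_mat n n" and BT: "transpose_mat B = B"
    using A sym by (auto simp: B_def map_mat_transpose)
  obtain v where v: "v \<in> carrier_vec n" "v \<noteq> 0\<^sub>v n" and Bv: "B *\<^sub>v v = a \<cdot>\<^sub>v v"
    using ev B unfolding B_def eigenvalue_def eigenvector_def by auto
  have "B *\<^sub>v conjugate v = conjugate (B *\<^sub>v v)"
    using B v by (intro eq_vecI) (auto simp: B_def scalar_prod_def row_def sum_conjugate)
  also have "\<dots> = cnj a \<cdot>\<^sub>v conjugate v"
    by (simp add: Bv conjugate_smult_vec)
  finally have "v \<bullet> (B *\<^sub>v conjugate v) = cnj a * (v \<bullet>c v)"
    using v by simp
  moreover have "v \<bullet> (B *\<^sub>v conjugate v) = a * (v \<bullet>c v)"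
    using transpose_vec_mult_scalar[OF B carrier_vec_conjugate[OF v(1)] v(1)] v Bv BT by simp
  moreover have "v \<bullet>c v \<noteq> 0"
    using v by simp
  ultimately have "cnj a = a"
    by simp
  then show ?thesis
    by (simp add: Reals_cnj_iff)
qed

lemma unit_vector_orthonormal_extension:
  fixes v :: "real vec"
  assumes v: "v \<in> carrier_vec n" and vv: "v \<bullet> v = 1"
  obtains W where "orthonormal_mat n W" "col W 0 = v"
proof -
  interpret cof_vec_space n "TYPE(real)" .
  have vnz: "v \<noteq> 0\<^sub>v n" using vv v by auto
  have n: "0 < n" using v vv by (cases n) (auto simp: scalar_prod_def)
  define b where "b = basis_completion v"
  from basis_completion[OF v vnz, folded b_def]
  have b: "distinct b" "\<not> lin_dep (set b)" "set b \<subseteq> carrier_vec n" "hd b = v" "length b = n"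
    by auto
  obtain vs where bv: "b = v # vs" using b(4,5) n by (cases b) auto
  define ws where "ws = gram_schmidt n b"
  from gram_schmidt_result[OF b(3,1,2) refl, folded ws_def]
  have ws: "set ws \<subseteq> carrier_vec n" "corthogonal ws" "length ws = n"
    by (auto simp: b(5))
  have ws0: "ws ! 0 = v"
    using gram_schmidt_hd[OF v, of vs] n ws(3) unfolding ws_def bv[symmetric]
    by (metis hd_conv_nth length_0_conv not_less0)
  have wpos: "ws ! i \<bullet> ws ! i > 0" if "i < n" for i
  proof (rule real_scalar_prod_self_pos)
    show "ws ! i \<in> carrier_vec n" using that ws by auto
    then show "ws ! i \<noteq> 0\<^sub>v n"
      using corthogonalD[OF ws(2), of i i] that ws(3) by auto
  qed
  define us where "us = map (\<lambda>w. (1 / sqrt (w \<bullet> w)) \<cdot>\<^sub>v w) ws"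
  have wsc: "ws ! i \<in> carrier_vec n" if "i < n" for i
    using that ws by auto
  have us: "length us = n" "\<And>i. i < n \<Longrightarrow> us ! i \<in> carrier_vec n"
    using ws wsc by (auto simp: us_def)
  have us_prod: "us ! i \<bullet> us ! j = (if i = j then 1 else 0)" if "i < n" "j < n" for i j
  proof -
    have "us ! i \<bullet> us ! j = (ws ! i \<bullet> ws ! j) / (sqrt (ws ! i \<bullet> ws ! i) * sqrt (ws ! j \<bullet> ws ! j))"
      using that ws wsc[OF that(1)] wsc[OF that(2)] by (simp add: us_def)
    then show ?thesis
      using that wpos[OF that(1)] corthogonalD[OF ws(2), of i j] ws(3)
      by (auto simp: real_sqrt_mult[symmetric])
  qed
  define W where "W = mat_of_cols n us"
  have W: "W \<in> carrier_mat n n" and colW: "\<And>i. i < n \<Longrightarrow> col W i = us ! i"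
    using us by (auto simp: W_def col_mat_of_cols)
  have "transpose_mat W * W = 1\<^sub>m n"
    using W by (intro eq_matI) (auto simp: colW us_prod)
  moreover have "col W 0 = v"
    using n ws0 vv by (simp add: colW us_def ws(3))
  ultimately show thesis
    using W that by (simp add: orthonormal_mat_def)
qed

lemma symmetric_deflation:
  fixes A :: "real mat"
  assumes A: "A \<in> carrier_mat n n" and sym: "transpose_mat A = A"
    and v: "v \<in> carrier_vec n" "v \<bullet> v = 1" and Av: "A *\<^sub>v v = e \<cdot>\<^sub>v v"
  obtains W B where "orthonormal_mat n W" "B \<in> carrier_mat (n - 1) (n - 1)" "transpose_mat B = B"
    "transpose_mat W * A * W = four_block_mat (mat 1 1 (\<lambda>_. e)) (0\<^sub>m 1 (n - 1)) (0\<^sub>m (n - 1) 1) B"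
proof -
  obtain W where W: "orthonormal_mat n W" and W0: "col W 0 = v"
    using unit_vector_orthonormal_extension[OF v] .
  have n: "0 < n" using v by (cases n) (auto simp: scalar_prod_def)
  have Wc: "W \<in> carrier_mat n n" using W by (simp add: orthonormal_mat_def)
  define A' where "A' = transpose_mat W * A * W"
  have A'_entry: "A' $$ (i,j) = col W i \<bullet> (A *\<^sub>v col W j)" if "i < n" "j < n" for i j
    unfolding A'_def by (rule congruence_entry[OF Wc A that])
  have A'_sym: "A' $$ (i,j) = A' $$ (j,i)" if "i < n" "j < n" for i j
    using that Wc by (simp add: A'_entry symmetric_scalar_prod[OF A sym])
  have A'_col0: "A' $$ (i,0) = (if i = 0 then e else 0)" if "i < n" for i
  proof -
    have "A' $$ (i,0) = e * (col W i \<bullet> col W 0)"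
      unfolding A'_entry[OF that n] W0 Av using that Wc v by simp
    then show ?thesis
      using orthonormal_mat_col_prod[OF W that n] by simp
  qed
  define B where "B = mat (n - 1) (n - 1) (\<lambda>(i,j). A' $$ (Suc i, Suc j))"
  have B: "B \<in> carrier_mat (n - 1) (n - 1)"
    by (simp add: B_def)
  have B_sym: "transpose_mat B = B"
    by (rule eq_matI) (auto simp: B_def A'_sym)
  have "A' = four_block_mat (mat 1 1 (\<lambda>_. e)) (0\<^sub>m 1 (n - 1)) (0\<^sub>m (n - 1) 1) B"
  proof (rule eq_matI)
    fix i j assume "i < dim_row (four_block_mat (mat 1 1 (\<lambda>_. e)) (0\<^sub>m 1 (n - 1)) (0\<^sub>m (n - 1) 1) B)"
      "j < dim_col (four_block_mat (mat 1 1 (\<lambda>_. e)) (0\<^sub>m 1 (n - 1)) (0\<^sub>m (n - 1) 1) B)"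
    then have ij: "i < n" "j < n" using n by (auto simp: B_def)
    then show "A' $$ (i, j) = four_block_mat (mat 1 1 (\<lambda>_. e)) (0\<^sub>m 1 (n - 1)) (0\<^sub>m (n - 1) 1) B $$ (i, j)"
      using A'_col0 A'_sym[OF ij] A'_col0[OF ij(2)] by (cases i; cases j) (auto simp: B_def)
  qed (use A Wc n in \<open>auto simp: A'_def B_def\<close>)
  then show thesis
    using that[OF W B B_sym] by (simp add: A'_def)
qed

lemma map_poly_of_real_mult:
  "map_poly complex_of_real (p * q) = map_poly complex_of_real p * map_poly complex_of_real q"
  by (rule poly_eqI) (simp add: coeff_mult coeff_map_poly of_real_sum)

lemma symmetric_char_poly_splits:
  fixes A :: "real mat"
  assumes A: "A \<in> carrier_mat n n" and sym: "transpose_mat A = A"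
  obtains es where "char_poly A = (\<Prod>e\<leftarrow>es. [:-e,1:])"
proof -
  let ?B = "map_mat complex_of_real A"
  have B: "?B \<in> carrier_mat n n" using A by simp
  obtain as where cB: "char_poly ?B = (\<Prod>a\<leftarrow>as. [:-a,1:])"
    using char_poly_factorized[OF B] by blast
  have real: "a \<in> \<real>" if "a \<in> set as" for a
  proof -
    have "poly (char_poly ?B) a = 0"
      unfolding cB using that by (induct as) auto
    then show ?thesis
      using symmetric_eigenvalue_real[OF A sym] eigenvalue_root_char_poly[OF B] by blast
  qed
  have "map_poly complex_of_real (\<Prod>e\<leftarrow>map Re as. [:-e,1:]) = (\<Prod>a\<leftarrow>as. [:-a,1:])"
    using real by (induct as) (simp_all add: map_poly_of_real_mult of_real_Re del: mult_pCons_left)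
  then have images: "map_poly complex_of_real (char_poly A) = map_poly complex_of_real (\<Prod>e\<leftarrow>map Re as. [:-e,1:])"
    using of_real_hom.char_poly_hom[OF A] cB by metis
  have "char_poly A = (\<Prod>e\<leftarrow>map Re as. [:-e,1:])"
  proof (rule poly_eqI)
    fix i
    show "coeff (char_poly A) i = coeff (\<Prod>e\<leftarrow>map Re as. [:-e,1:]) i"
      using arg_cong[OF images, of "\<lambda>p. coeff p i"] by (simp add: coeff_map_poly)
  qed
  then show thesis
    by (rule that)
qed

lemma unit_eigenvector:
  fixes A :: "real mat"
  assumes A: "A \<in> carrier_mat n n" and ev: "eigenvalue A e"
  obtains v where "v \<in> carrier_vec n" "v \<bullet> v = 1" "A *\<^sub>v v = e \<cdot>\<^sub>v v"
proof -
  obtain v0 where v0: "v0 \<in> carrier_vec n" "v0 \<noteq> 0\<^sub>v n" "A *\<^sub>v v0 = e \<cdot>\<^sub>v v0"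
    using ev A by (auto simp: eigenvalue_def eigenvector_def)
  define v where "v = (1 / sqrt (v0 \<bullet> v0)) \<cdot>\<^sub>v v0"
  have "v0 \<bullet> v0 > 0"
    using real_scalar_prod_self_pos[OF v0(1,2)] .
  then have "v \<in> carrier_vec n" "v \<bullet> v = 1" "A *\<^sub>v v = e \<cdot>\<^sub>v v"
    using v0 A by (auto simp: v_def mult_mat_vec real_sqrt_mult[symmetric])
  then show thesis
    by (rule that)
qed

lemma orthonormal_mat_one_block:
  assumes U: "orthonormal_mat (n - 1) U" and n: "0 < n"
  shows "orthonormal_mat n (four_block_mat (1\<^sub>m 1) (0\<^sub>m 1 (n - 1)) (0\<^sub>m (n - 1) 1) U)"
proof -
  have Uc: "U \<in> carrier_mat (n - 1) (n - 1)"
    using U by (simp add: orthonormal_mat_def)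
  have "transpose_mat (four_block_mat (1\<^sub>m 1) (0\<^sub>m 1 (n - 1)) (0\<^sub>m (n - 1) 1) U)
      * four_block_mat (1\<^sub>m 1) (0\<^sub>m 1 (n - 1)) (0\<^sub>m (n - 1) 1) U = 1\<^sub>m n"
    using U Uc n
    by (subst transpose_four_block_mat, auto, subst mult_four_block_mat, auto simp: orthonormal_mat_def)
  then show ?thesis
    using Uc n by (auto simp: orthonormal_mat_def)
qed

theorem spectral_theorem:
  fixes A :: "real mat"
  assumes "A \<in> carrier_mat n n" "transpose_mat A = A" "char_poly A = (\<Prod>e\<leftarrow>es. [:-e,1:])"
  shows "\<exists>U. orthonormal_mat n U \<and> transpose_mat U * A * U = mat_diag n (\<lambda>i. es ! i)"
  using assms
proof (induction es arbitrary: n A)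
  case Nil
  then have "n = 0"
    using degree_monic_char_poly[of A n] by simp
  then show ?case
    by (intro exI[of _ "1\<^sub>m 0"]) (auto simp: orthonormal_mat_def mat_diag_def intro!: eq_matI)
next
  case (Cons e es n A)
  note A = Cons.prems(1) and sym = Cons.prems(2)
  have "eigenvalue A e"
    using Cons.prems(3) by (simp add: eigenvalue_root_char_poly[OF A])
  then obtain v where v: "v \<in> carrier_vec n" "v \<bullet> v = 1" "A *\<^sub>v v = e \<cdot>\<^sub>v v"
    using unit_eigenvector[OF A] by blast
  have n: "0 < n"
    using v by (cases n) (auto simp: scalar_prod_def)
  obtain W B where W: "orthonormal_mat n W" and B: "B \<in> carrier_mat (n - 1) (n - 1)"
    and B_sym: "transpose_mat B = B"
    and WAW: "transpose_mat W * A * W = four_block_mat (mat 1 1 (\<lambda>_. e)) (0\<^sub>m 1 (n - 1)) (0\<^sub>m (n - 1) 1) B"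
    using symmetric_deflation[OF A sym v] .
  have "[:-e,1:] * (\<Prod>e\<leftarrow>es. [:-e,1:]) = char_poly (transpose_mat W * A * W)"
    using Cons.prems(3) orthonormal_congruence_char_poly[OF W A] by simp
  also have "\<dots> = [:-e,1:] * char_poly B"
    unfolding WAW by (subst char_poly_four_block_zeros_col[OF _ _ B])
      (auto simp: char_poly_defs det_def sign_def)
  finally have "char_poly B = (\<Prod>e\<leftarrow>es. [:-e,1:])"
    by (metis mult_cancel_left pCons_eq_0_iff zero_neq_one)
  then obtain U where U: "orthonormal_mat (n - 1) U"
    and UBU: "transpose_mat U * B * U = mat_diag (n - 1) (\<lambda>i. es ! i)"
    using Cons.IH[OF B B_sym] by blast
  have Uc: "U \<in> carrier_mat (n - 1) (n - 1)" using U by (simp add: orthonormal_mat_def)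
  define V where "V = four_block_mat (1\<^sub>m 1) (0\<^sub>m 1 (n - 1)) (0\<^sub>m (n - 1) 1) U"
  have V: "orthonormal_mat n V"
    unfolding V_def using U n by (rule orthonormal_mat_one_block)
  have VT: "transpose_mat V = four_block_mat (1\<^sub>m 1) (0\<^sub>m 1 (n - 1)) (0\<^sub>m (n - 1) 1) (transpose_mat U)"
    using Uc by (auto simp: V_def transpose_four_block_mat)
  have "transpose_mat V * (transpose_mat W * A * W) * V
      = four_block_mat (mat 1 1 (\<lambda>_. e)) (0\<^sub>m 1 (n - 1)) (0\<^sub>m (n - 1) 1) (transpose_mat U * B * U)"
    unfolding VT WAW by (subst V_def, (subst mult_four_block_mat, insert Uc B, auto)+)
  also have "\<dots> = mat_diag n (\<lambda>i. (e # es) ! i)"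
    unfolding UBU by (rule eq_matI) (use n in \<open>auto simp: mat_diag_def\<close>)
  finally have "transpose_mat (W * V) * A * (W * V) = mat_diag n (\<lambda>i. (e # es) ! i)"
    using congruence_mult[OF _ _ A, of W V] W V by (simp add: orthonormal_mat_def)
  then show ?case
    using orthonormal_mat_mult[OF W V] by blast
qed

lemma proots_linear_factors: "proots (\<Prod>e\<leftarrow>es. [:-e,1:]) = mset (es :: 'a :: idom list)"
proof (induct es)
  case (Cons e es)
  have "(\<Prod>e\<leftarrow>es. [:-e,1:]) \<noteq> 0"
    by (auto simp: prod_list_zero_iff)
  then show ?case
    using Cons by (simp add: proots_mult del: mult_pCons_left)
qed simp

lemma sorted_eigenvalues_desc: "sorted_wrt (\<ge>) (eigenvalues_desc A)"
  by (simp add: eigenvalues_desc_def sorted_wrt_rev)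

lemma eigenvalues_desc_linear_factors:
  assumes "char_poly A = (\<Prod>e\<leftarrow>es. [:-e,1:])"
  shows "mset (eigenvalues_desc A) = mset es"
  using assms by (simp add: eigenvalues_desc_def proots_linear_factors)

lemma symmetric_spectral_decomposition:
  fixes A :: "real mat"
  assumes A: "A \<in> carrier_mat n n" and sym: "transpose_mat A = A"
  obtains U where "orthonormal_mat n U"
    "transpose_mat U * A * U = mat_diag n (\<lambda>i. eigenvalues_desc A ! i)"
    "length (eigenvalues_desc A) = n"
proof -
  obtain es where es: "char_poly A = (\<Prod>e\<leftarrow>es. [:-e,1:])"
    using symmetric_char_poly_splits[OF A sym] .
  then have ms: "mset (eigenvalues_desc A) = mset es"
    by (rule eigenvalues_desc_linear_factors)
  then have "char_poly A = (\<Prod>e\<leftarrow>eigenvalues_desc A. [:-e,1:])"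
    using es by (metis mset_map prod_mset_prod_list)
  moreover have "length (eigenvalues_desc A) = n"
    using degree_monic_char_poly[OF A] es degree_linear_factors[of uminus es] ms
    by (metis mset_eq_length)
  ultimately show thesis
    using that spectral_theorem[OF A sym] by blast
qed

definition col_proj_mat :: "nat \<Rightarrow> real mat \<Rightarrow> nat set \<Rightarrow> real mat" where
  "col_proj_mat n V S = mat n n (\<lambda>(i,j). \<Sum>k\<in>S. V $$ (i,k) * V $$ (j,k))"

lemma col_proj_mat_carrier [simp]: "col_proj_mat n V S \<in> carrier_mat n n"
  by (simp add: col_proj_mat_def)

lemma col_proj_mat_symmetric: "transpose_mat (col_proj_mat n V S) = col_proj_mat n V S"
  by (intro eq_matI) (auto simp: col_proj_mat_def mult.commute)

lemma col_proj_mat_idempotent: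
  assumes V: "orthonormal_mat n V" and S: "S \<subseteq> {..<n}"
  shows "col_proj_mat n V S * col_proj_mat n V S = col_proj_mat n V S"
proof (rule eq_matI)
  fix i j assume "i < dim_row (col_proj_mat n V S)" "j < dim_col (col_proj_mat n V S)"
  then have i: "i < n" and j: "j < n" by (auto simp: col_proj_mat_def)
  have fin: "finite S" using S finite_subset by blast
  have "(col_proj_mat n V S * col_proj_mat n V S) $$ (i,j) =
    (\<Sum>l<n. (\<Sum>k\<in>S. V $$ (i,k) * V $$ (l,k)) * (\<Sum>k'\<in>S. V $$ (l,k') * V $$ (j,k')))"
    using i j by (simp add: col_proj_mat_def scalar_prod_def lessThan_atLeast0 row_def col_def)
  also have "\<dots> = (\<Sum>l<n. \<Sum>k\<in>S. \<Sum>k'\<in>S. V $$ (i,k) * V $$ (l,k) * (V $$ (l,k') * V $$ (j,k')))"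
    by (simp add: sum_product)
  also have "\<dots> = (\<Sum>k\<in>S. \<Sum>k'\<in>S. \<Sum>l<n. V $$ (i,k) * V $$ (l,k) * (V $$ (l,k') * V $$ (j,k')))"
    by (simp add: sum.swap[of _ "{..<n}"])
  also have "\<dots> = (\<Sum>k\<in>S. \<Sum>k'\<in>S. V $$ (i,k) * V $$ (j,k') * (\<Sum>l<n. V $$ (l,k) * V $$ (l,k')))"
    by (simp add: sum_distrib_left ac_simps)
  also have "\<dots> = (\<Sum>k\<in>S. \<Sum>k'\<in>S. V $$ (i,k) * V $$ (j,k') * (if k = k' then 1 else 0))"
  proof (intro sum.cong refl)
    fix k k' assume "k \<in> S" "k' \<in> S"
    then have "k < n" "k' < n"
      using S by auto
    then show "V $$ (i,k) * V $$ (j,k') * (\<Sum>l<n. V $$ (l,k) * V $$ (l,k'))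
        = V $$ (i,k) * V $$ (j,k') * (if k = k' then 1 else 0)"
      using orthonormal_mat_cols[OF V] by simp
  qed
  also have "\<dots> = col_proj_mat n V S $$ (i,j)"
    using i j fin by (simp add: col_proj_mat_def if_distrib[of "\<lambda>x. _ * x"] cong: if_cong)
  finally show "(col_proj_mat n V S * col_proj_mat n V S) $$ (i,j) = col_proj_mat n V S $$ (i,j)" .
qed auto

lemma rank_col_proj_mat_le:
  assumes "finite S"
  shows "vec_space.rank n (col_proj_mat n V S) \<le> card S"
  using assms
proof (induct S rule: finite_induct)
  case empty
  interpret vec_space "TYPE(real)" n .
  have "col_proj_mat n V {} = 0\<^sub>m n n"
    by (rule eq_matI) (auto simp: col_proj_mat_def)
  then show ?case
    using rank_0I by simp
next
  case (insert k S)
  interpret vec_space "TYPE(real)" n .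
  define R where "R = mat n n (\<lambda>(i,j). V $$ (i,k) * V $$ (j,k))"
  have R: "R \<in> carrier_mat n n" by (simp add: R_def)
  have "col_proj_mat n V (insert k S) = col_proj_mat n V S + R"
    using insert by (intro eq_matI) (auto simp: col_proj_mat_def R_def add.commute)
  then have "rank (col_proj_mat n V (insert k S)) \<le> rank (col_proj_mat n V S) + rank R"
    using rank_subadditive[OF col_proj_mat_carrier R] by simp
  also have "rank R \<le> 1"
    by (rule rank_le_1_product_entries[OF R, of "\<lambda>i. V $$ (i,k)" "\<lambda>j. V $$ (j,k)"])
      (auto simp: R_def)
  finally show ?case
    using insert by simp
qed

lemma rank_col_proj_mat:
  assumes V: "orthonormal_mat n V" and S: "S \<subseteq> {..<n}"
  shows "vec_space.rank n (col_proj_mat n V S) = card S"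
proof -
  interpret vec_space "TYPE(real)" n .
  have fin: "finite S" using S finite_subset by blast
  have "col_proj_mat n V S + col_proj_mat n V ({..<n} - S) = col_proj_mat n V {..<n}"
    using S fin by (intro eq_matI) (auto simp: col_proj_mat_def sum.subset_diff[of S "{..<n}"])
  also have "\<dots> = 1\<^sub>m n"
    using orthonormal_mat_rows[OF V] by (intro eq_matI) (auto simp: col_proj_mat_def)
  moreover have "rank (1\<^sub>m n) = n"
    using det_rank_iff[of "1\<^sub>m n"] by simp
  ultimately have "n \<le> rank (col_proj_mat n V S) + rank (col_proj_mat n V ({..<n} - S))"
    using rank_subadditive[OF col_proj_mat_carrier col_proj_mat_carrier] by metis
  also have "rank (col_proj_mat n V ({..<n} - S)) \<le> n - card S"
    using rank_col_proj_mat_le[of "{..<n} - S" n V] S fin by (simp add: card_Diff_subset)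
  finally have "card S \<le> rank (col_proj_mat n V S)"
    using card_mono[OF _ S] by simp
  then show ?thesis
    using rank_col_proj_mat_le[OF fin, of n V] by simp
qed

lemma orth_proj_col_proj_mat:
  assumes "orthonormal_mat n V" "S \<subseteq> {..<n}"
  shows "orth_proj n (card S) (col_proj_mat n V S)"
  using assms col_proj_mat_idempotent col_proj_mat_symmetric rank_col_proj_mat
  by (simp add: orth_proj_def)

lemma col_proj_mat_weighted_sum:
  assumes "finite S"
  shows "(\<Sum>i<n. \<Sum>j<n. w i j * col_proj_mat n V S $$ (i,j))
    = (\<Sum>k\<in>S. \<Sum>i<n. \<Sum>j<n. w i j * (V $$ (i,k) * V $$ (j,k)))"
  by (simp add: col_proj_mat_def sum_distrib_left sum.swap[of _ S])

lemma col_proj_mat_quadratic_form: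
  assumes "finite S"
  shows "(\<Sum>i<n. \<Sum>j<n. (b i * b j) * col_proj_mat n V S $$ (i,j)) = (\<Sum>k\<in>S. (\<Sum>i<n. V $$ (i,k) * b i)\<^sup>2)"
  unfolding col_proj_mat_weighted_sum[OF assms] by (simp add: power2_eq_square sum_product ac_simps)

lemma col_proj_mat_frobenius:
  assumes V: "V \<in> carrier_mat n n" and A: "A \<in> carrier_mat n n" and S: "S \<subseteq> {..<n}"
  shows "(\<Sum>i<n. \<Sum>j<n. A $$ (i,j) * col_proj_mat n V S $$ (i,j)) = (\<Sum>k\<in>S. (transpose_mat V * A * V) $$ (k,k))"
proof -
  have fin: "finite S" using S finite_subset by blast
  show ?thesis
    unfolding col_proj_mat_weighted_sum[OF fin]
  proof (intro sum.cong refl)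
    fix k assume k: "k \<in> S"
    show "(\<Sum>i<n. \<Sum>j<n. A $$ (i,j) * (V $$ (i,k) * V $$ (j,k))) = (transpose_mat V * A * V) $$ (k,k)"
      by (rule congruence_diag_entry[of V n n A k, symmetric]) (use k S V A in auto)
  qed
qed

lemma trace_col_proj_mat:
  assumes V: "orthonormal_mat n V" and S: "S \<subseteq> {..<n}"
  shows "(\<Sum>i<n. col_proj_mat n V S $$ (i,i)) = card S"
proof -
  have "(\<Sum>i<n. col_proj_mat n V S $$ (i,i)) = (\<Sum>k\<in>S. \<Sum>i<n. V $$ (i,k) * V $$ (i,k))"
    by (simp add: col_proj_mat_def sum.swap[of _ S])
  also have "\<dots> = (\<Sum>k\<in>S. 1)"
    using S orthonormal_mat_cols[OF V] by (intro sum.cong refl) auto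
  finally show ?thesis
    by simp
qed

lemma square_sum_le_card_sum_squares:
  fixes b :: "nat \<Rightarrow> real"
  shows "(\<Sum>i<N. b i)^2 \<le> real N * (\<Sum>i<N. (b i)^2)"
proof -
  have "0 \<le> (\<Sum>i<N. \<Sum>j<N. (b i - b j)^2)"
    by (intro sum_nonneg) auto
  also have "(\<Sum>i<N. \<Sum>j<N. (b i - b j)^2) = (\<Sum>i<N. \<Sum>j<N. (b i)^2 + (b j)^2 - 2 * (b i * b j))"
    by (intro sum.cong refl) (simp add: power2_diff)
  also have "\<dots> = 2 * (real N * (\<Sum>i<N. (b i)^2)) - 2 * (\<Sum>i<N. b i)^2"
    by (simp add: sum_subtractf sum.distrib sum_distrib_left[symmetric]
        power2_eq_square sum_product[symmetric] sum_distrib_right[symmetric])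
  finally show ?thesis
    by simp
qed

lemma sum_abs_col_proj_mat_le:
  assumes V: "orthonormal_mat n V" and S: "S \<subseteq> {..<n}"
  shows "(\<Sum>i<n. \<Sum>j<n. \<bar>col_proj_mat n V S $$ (i,j)\<bar>) \<le> card S * n"
proof -
  have "(\<Sum>i<n. \<Sum>j<n. \<bar>col_proj_mat n V S $$ (i,j)\<bar>)
      \<le> (\<Sum>i<n. \<Sum>j<n. \<Sum>k\<in>S. \<bar>V $$ (i,k)\<bar> * \<bar>V $$ (j,k)\<bar>)"
    by (intro sum_mono) (auto simp: col_proj_mat_def abs_mult[symmetric] intro: order.trans[OF sum_abs])
  also have "\<dots> = (\<Sum>k\<in>S. (\<Sum>i<n. \<bar>V $$ (i,k)\<bar>)^2)"
    by (simp add: power2_eq_square sum_product sum.swap[of _ S])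
  also have "\<dots> \<le> (\<Sum>k\<in>S. real n * (\<Sum>i<n. \<bar>V $$ (i,k)\<bar>^2))"
    by (intro sum_mono square_sum_le_card_sum_squares)
  also have "\<dots> = (\<Sum>k\<in>S. real n)"
    using S orthonormal_mat_cols[OF V] by (intro sum.cong refl) (auto simp: power2_eq_square)
  finally show ?thesis
    by simp
qed

lemma diag_congruence_col_proj_mat:
  assumes V: "orthonormal_mat N V" and d01: "\<And>k. k < N \<Longrightarrow> d k = 0 \<or> d k = 1"
  shows "V * mat_diag N d * transpose_mat V = col_proj_mat N V {k \<in> {..<N}. d k = 1}"
    (is "_ = col_proj_mat N V ?S")
proof (rule eq_matI)
  have Vc: "V \<in> carrier_mat N N" using V by (simp add: orthonormal_mat_def)
  fix i j assume "i < dim_row (col_proj_mat N V ?S)" "j < dim_col (col_proj_mat N V ?S)"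
  then have i: "i < N" and j: "j < N" by (auto simp: col_proj_mat_def)
  have "(V * mat_diag N d * transpose_mat V) $$ (i,j) = (\<Sum>k<N. V $$ (i,k) * d k * V $$ (j,k))"
    using i j Vc by (simp add: mat_diag_mult_right[OF Vc] scalar_prod_def row_def col_def lessThan_atLeast0)
  also have "\<dots> = (\<Sum>k<N. if d k = 1 then V $$ (i,k) * V $$ (j,k) else 0)"
    using d01 by (intro sum.cong refl) fastforce
  also have "\<dots> = (\<Sum>k\<in>?S. V $$ (i,k) * V $$ (j,k))"
    by (rule sum.inter_filter[symmetric]) simp
  also have "\<dots> = col_proj_mat N V ?S $$ (i,j)"
    using i j by (simp add: col_proj_mat_def)
  finally show "(V * mat_diag N d * transpose_mat V) $$ (i,j) = col_proj_mat N V ?S $$ (i,j)" .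
qed (use V in \<open>auto simp: col_proj_mat_def orthonormal_mat_def\<close>)

lemma orth_proj_decomposition:
  assumes "orth_proj N r Q"
  obtains V S where "orthonormal_mat N V" "S \<subseteq> {..<N}" "card S = r" "Q = col_proj_mat N V S"
proof -
  have Q: "Q \<in> carrier_mat N N" and QQ: "Q * Q = Q" and QT: "transpose_mat Q = Q"
    and rk: "vec_space.rank N Q = r"
    using assms by (auto simp: orth_proj_def)
  define d where "d = (\<lambda>i. eigenvalues_desc Q ! i)"
  obtain V where V: "orthonormal_mat N V" and VQV: "transpose_mat V * Q * V = mat_diag N d"
    using symmetric_spectral_decomposition[OF Q QT] unfolding d_def by blast
  have Vc: "V \<in> carrier_mat N N" using V by (simp add: orthonormal_mat_def)
  have VV: "V * transpose_mat V = 1\<^sub>m N" using orthonormal_mat_right_inverse[OF V] .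
  have Q_eq: "Q = V * mat_diag N d * transpose_mat V"
  proof -
    have "V * mat_diag N d * transpose_mat V = (V * transpose_mat V) * Q * (V * transpose_mat V)"
      unfolding VQV[symmetric] using Vc Q by (simp add: assoc_mult_mat[of _ N N _ N _ N])
    then show ?thesis using VV Q by simp
  qed
  have diag_idem: "mat_diag N (\<lambda>k. d k * d k) = mat_diag N d"
  proof -
    have "mat_diag N d * mat_diag N d = transpose_mat V * (Q * (V * transpose_mat V) * Q) * V"
      unfolding VQV[symmetric] using Vc Q by (simp add: assoc_mult_mat[of _ N N _ N _ N])
    then show ?thesis
      using VV Q QQ VQV by simp
  qed
  have d01: "d k = 0 \<or> d k = 1" if "k < N" for k
  proof -
    have "d k * d k = d k"
      using arg_cong[OF diag_idem, of "\<lambda>M. M $$ (k,k)"] that by (simp add: mat_diag_def)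
    then show ?thesis
      by (metis mult_cancel_right1 mult_eq_0_iff)
  qed
  define S where "S = {k \<in> {..<N}. d k = 1}"
  have S: "S \<subseteq> {..<N}" by (auto simp: S_def)
  have QS: "Q = col_proj_mat N V S"
    unfolding Q_eq S_def by (rule diag_congruence_col_proj_mat[OF V d01])
  then have "card S = r"
    using rank_col_proj_mat[OF V S] rk by simp
  then show thesis
    using that V S QS by blast
qed

lemma orth_proj_rank_le:
  assumes "orth_proj N r Q"
  shows "r \<le> N"
  using assms
proof (rule orth_proj_decomposition)
  fix V S assume "S \<subseteq> {..<N}" "card S = r"
  then show "r \<le> N"
    using card_mono[of "{..<N}" S] by simp
qed

lemma trace_orth_proj:
  assumes "orth_proj N r Q"
  shows "(\<Sum>i<N. Q $$ (i,i)) = r"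
  using assms by (rule orth_proj_decomposition) (simp add: trace_col_proj_mat)

lemma sum_abs_orth_proj_le:
  assumes "orth_proj N r Q"
  shows "(\<Sum>i<N. \<Sum>j<N. \<bar>Q $$ (i,j)\<bar>) \<le> r * N"
  using assms
proof (rule orth_proj_decomposition)
  fix V S assume "orthonormal_mat N V" "S \<subseteq> {..<N}" "card S = r" "Q = col_proj_mat N V S"
  then show ?thesis
    using sum_abs_col_proj_mat_le[of N V S] by simp
qed

lemma orth_proj_exists:
  assumes "r \<le> N"
  shows "orth_proj N r (col_proj_mat N (1\<^sub>m N) {..<r})"
  using orth_proj_col_proj_mat[of N "1\<^sub>m N" "{..<r}"] assms
  by (simp add: orthonormal_mat_def)

lemma beta_N_le:
  assumes "r \<le> N"
  shows "beta_N r N \<le> r"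
proof -
  let ?T = "{(\<Sum>i<N. \<Sum>j<N. \<bar>Q $$ (i,j)\<bar>) | Q. orth_proj N r Q}"
  have "Sup ?T \<le> r * N"
    using orth_proj_exists[OF assms] sum_abs_orth_proj_le by (intro cSup_least) blast+
  then show ?thesis
    by (cases "N = 0") (auto simp: beta_N_def field_simps)
qed

lemma sum_abs_orth_proj_le_beta:
  assumes Q: "orth_proj N r Q"
  shows "(\<Sum>i<N. \<Sum>j<N. \<bar>Q $$ (i,j)\<bar>) \<le> N * beta r"
proof (cases "N = 0")
  case False
  let ?T = "{(\<Sum>i<N. \<Sum>j<N. \<bar>Q $$ (i,j)\<bar>) | Q. orth_proj N r Q}"
  have "r \<le> N"
    using orth_proj_rank_le[OF Q] .
  have "bdd_above {beta_N r N' | N'. r \<le> N'}"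
    using beta_N_le by (intro bdd_aboveI[of _ "real r"]) auto
  then have "beta_N r N \<le> beta r"
    unfolding beta_def using \<open>r \<le> N\<close> by (intro cSup_upper) auto
  have "bdd_above ?T"
    using sum_abs_orth_proj_le by (intro bdd_aboveI[of _ "real (r * N)"]) auto
  then have "(\<Sum>i<N. \<Sum>j<N. \<bar>Q $$ (i,j)\<bar>) \<le> Sup ?T"
    using Q by (intro cSup_upper) auto
  also have "\<dots> = N * beta_N r N"
    using False by (simp add: beta_N_def)
  also have "\<dots> \<le> N * beta r"
    using \<open>beta_N r N \<le> beta r\<close> by (simp add: mult_left_mono)
  finally show ?thesis .
qed simp

section \<open>Householder reflections\<close>

definition householder_mat :: "nat \<Rightarrow> real vec \<Rightarrow> real mat" where
  "householder_mat n w = mat n n (\<lambda>(i,j). (if i = j then 1 else 0) - 2 / (w \<bullet> w) * (w $ i * w $ j))"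

lemma householder_mat_orthonormal:
  assumes w: "w \<in> carrier_vec n"
  shows "orthonormal_mat n (householder_mat n w)"
proof -
  define t where "t = 2 / (w \<bullet> w)"
  define H where "H = householder_mat n w"
  have He: "H $$ (i,j) = (if i = j then 1 else 0) - t * (w $ i * w $ j)" if "i < n" "j < n" for i j
    using that by (simp add: H_def householder_mat_def t_def)
  have "transpose_mat H * H = 1\<^sub>m n"
  proof (rule eq_matI)
    fix i j assume "i < dim_row (1\<^sub>m n :: real mat)" "j < dim_col (1\<^sub>m n :: real mat)"
    then have i: "i < n" and j: "j < n" by auto
    have "(transpose_mat H * H) $$ (i,j) = (\<Sum>l<n. H $$ (l,i) * H $$ (l,j))"
      using i j by (simp add: H_def householder_mat_def scalar_prod_def lessThan_atLeast0 row_transpose col_def)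
    also have "\<dots> = (\<Sum>l<n. (if l = i then 1 else 0) * (if l = j then 1 else 0)
        - t * w $ i * (if l = j then w $ l else 0) - t * w $ j * (if l = i then w $ l else 0)
        + t * t * w $ i * w $ j * (w $ l * w $ l))"
      by (intro sum.cong refl) (auto simp: He i j algebra_simps)
    also have "\<dots> = (if i = j then 1 else 0) - t * w $ i * w $ j - t * w $ j * w $ i
        + t * t * w $ i * w $ j * (w \<bullet> w)"
      using i j w
      by (simp add: scalar_prod_def lessThan_atLeast0 sum.distrib sum_subtractf sum_distrib_left[symmetric]
          if_distrib[of "\<lambda>x. x * _"] cong: if_cong)
    also have "\<dots> = (if i = j then 1 else 0)"
    proof -
      have "t * t * (w \<bullet> w) = 2 * t"
        unfolding t_def by (cases "w \<bullet> w = 0") (auto simp: field_simps power2_eq_square)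
      then show ?thesis
        by (simp add: algebra_simps) (metis mult.assoc mult.commute)
    qed
    finally show "(transpose_mat H * H) $$ (i,j) = 1\<^sub>m n $$ (i,j)"
      using i j by simp
  qed (auto simp: H_def householder_mat_def)
  then show ?thesis
    by (simp add: orthonormal_mat_def H_def householder_mat_def)
qed

lemma householder_mat_reflects:
  fixes c :: "real vec"
  assumes c: "c \<in> carrier_vec n" and p: "p < n" and k: "k < n" "k \<noteq> p"
    and w_def: "w = vec n (\<lambda>j. c $ j - (if j = p then sqrt (c \<bullet> c) else 0))"
  shows "(\<Sum>j<n. householder_mat n w $$ (j,k) * c $ j) = 0"
proof -
  define g where "g = sqrt (c \<bullet> c)"
  define t where "t = 2 / (w \<bullet> w)"
  have w: "w \<in> carrier_vec n" by (simp add: w_def)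
  have wl: "w $ l = c $ l - (if l = p then g else 0)" if "l < n" for l
    using that by (simp add: w_def g_def)
  have cc: "c \<bullet> c = (\<Sum>l<n. c $ l * c $ l)"
    using c by (simp add: scalar_prod_def lessThan_atLeast0)
  have gg: "g * g = c \<bullet> c"
    unfolding g_def cc by (simp add: sum_nonneg)
  have wc: "w \<bullet> c = c \<bullet> c - g * c $ p"
  proof -
    have "w \<bullet> c = (\<Sum>l<n. c $ l * c $ l - (if l = p then g * c $ l else 0))"
      using w c by (auto simp: scalar_prod_def lessThan_atLeast0 wl algebra_simps intro!: sum.cong)
    then show ?thesis
      unfolding cc using p by (simp add: sum_subtractf)
  qed
  \<comment> \<open>Since \<open>g = |c|\<close>, the reflection in the hyperplane orthogonal to \<open>w = c - g e\<^sub>p\<close> swaps \<open>c\<close> and \<open>g e\<^sub>p\<close>.\<close>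
  have ww: "w \<bullet> w = 2 * (w \<bullet> c)"
  proof -
    have "w \<bullet> w = (\<Sum>l<n. c $ l * c $ l - (if l = p then 2 * g * c $ l - g * g else 0))"
      using w by (auto simp: scalar_prod_def lessThan_atLeast0 wl algebra_simps intro!: sum.cong)
    then have "w \<bullet> w = c \<bullet> c - (2 * g * c $ p - g * g)"
      using p by (simp add: sum_subtractf cc)
    then show ?thesis
      using gg by (simp add: wc algebra_simps)
  qed
  have tw: "t * (w $ k * (w \<bullet> c)) = w $ k"
  proof (cases "w \<bullet> w = 0")
    case True
    then have "w = 0\<^sub>v n"
      using real_scalar_prod_self_pos[OF w] by fastforce
    then show ?thesis using k by simp
  next
    case False
    then show ?thesis unfolding t_def ww by (simp add: field_simps)
  qed
  have "(\<Sum>j<n. householder_mat n w $$ (j,k) * c $ j)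
      = (\<Sum>j<n. (if j = k then c $ j else 0) - t * w $ k * (w $ j * c $ j))"
    using k by (intro sum.cong refl) (auto simp: householder_mat_def t_def algebra_simps)
  also have "\<dots> = c $ k - t * (w $ k * (w \<bullet> c))"
    using k w c by (simp add: scalar_prod_def lessThan_atLeast0 sum_subtractf sum_distrib_left[symmetric] mult.assoc)
  finally show ?thesis
    using tw wl[OF k(1)] k(2) by simp
qed

lemma householder_mat_fixes:
  assumes "j < n" "k < n" "w $ j = 0"
  shows "householder_mat n w $$ (j,k) = (if j = k then 1 else 0)"
  using assms by (simp add: householder_mat_def)

section \<open>Projections onto top eigenvectors\<close>

lemma congruence_mat_diag_entry:
  fixes H :: "real mat"
  assumes H: "H \<in> carrier_mat n n" and k: "k < n"
  shows "(transpose_mat H * mat_diag n d * H) $$ (k,k) = (\<Sum>l<n. d l * (H $$ (l,k) * H $$ (l,k)))"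
proof -
  have "(\<Sum>j<n. mat_diag n d $$ (l,j) * (H $$ (l,k) * H $$ (j,k)))
      = (\<Sum>j<n. if j = l then d l * (H $$ (l,k) * H $$ (l,k)) else 0)" if "l < n" for l
    using that by (intro sum.cong refl) (auto simp: mat_diag_def)
  then show ?thesis
    using congruence_diag_entry[of H n n "mat_diag n d" k] H k by simp
qed

lemma diag_congruence_entry_ge:
  assumes H: "orthonormal_mat n H" and k: "k < n"
    and top: "\<And>l. l < n \<Longrightarrow> H $$ (l,k) \<noteq> 0 \<Longrightarrow> \<mu> \<le> d l"
  shows "\<mu> \<le> (transpose_mat H * mat_diag n d * H) $$ (k,k)"
proof -
  have "\<mu> = (\<Sum>l<n. \<mu> * (H $$ (l,k) * H $$ (l,k)))"
    using orthonormal_mat_cols[OF H k k] by (simp add: sum_distrib_left[symmetric])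
  also have "\<dots> \<le> (\<Sum>l<n. d l * (H $$ (l,k) * H $$ (l,k)))"
  proof (intro sum_mono)
    fix l assume "l \<in> {..<n}"
    then show "\<mu> * (H $$ (l,k) * H $$ (l,k)) \<le> d l * (H $$ (l,k) * H $$ (l,k))"
      using top[of l] by (cases "H $$ (l,k) = 0") (auto intro: mult_right_mono)
  qed
  also have "\<dots> = (transpose_mat H * mat_diag n d * H) $$ (k,k)"
    using H k by (simp add: orthonormal_mat_def congruence_mat_diag_entry)
  finally show ?thesis .
qed

lemma orthonormal_frame_orthogonal_to:
  fixes c :: "real vec"
  assumes c: "c \<in> carrier_vec n" and r: "r < n" and c_top: "\<And>j. r < j \<Longrightarrow> j < n \<Longrightarrow> c $ j = 0"
  obtains H where "orthonormal_mat n H" "\<And>k. k < r \<Longrightarrow> (\<Sum>j<n. H $$ (j,k) * c $ j) = 0"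
    "\<And>j k. k < r \<Longrightarrow> j < n \<Longrightarrow> r < j \<Longrightarrow> H $$ (j,k) = 0"
proof -
  define w where "w = vec n (\<lambda>j. c $ j - (if j = r then sqrt (c \<bullet> c) else 0))"
  show thesis
  proof (rule that[of "householder_mat n w"])
    show "orthonormal_mat n (householder_mat n w)"
      by (rule householder_mat_orthonormal) (simp add: w_def)
    show "(\<Sum>j<n. householder_mat n w $$ (j,k) * c $ j) = 0" if "k < r" for k
      using c r that by (intro householder_mat_reflects[OF _ _ _ _ w_def]) auto
    show "householder_mat n w $$ (j,k) = 0" if "k < r" "j < n" "r < j" for j k
      using that r c_top by (simp add: householder_mat_fixes w_def)
  qed
qed

lemma mult_mat_col_weighted_sum:
  fixes U H :: "'a :: comm_ring_1 mat"
  assumes U: "U \<in> carrier_mat n n" and H: "H \<in> carrier_mat n n" and k: "k < n"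
  shows "(\<Sum>i<n. (U * H) $$ (i,k) * b i) = (\<Sum>j<n. (\<Sum>i<n. U $$ (i,j) * b i) * H $$ (j,k))"
proof -
  have "(\<Sum>i<n. (U * H) $$ (i,k) * b i) = (\<Sum>i<n. \<Sum>j<n. U $$ (i,j) * H $$ (j,k) * b i)"
    using U H k by (simp add: scalar_prod_def lessThan_atLeast0 row_def col_def sum_distrib_right)
  also have "\<dots> = (\<Sum>j<n. \<Sum>i<n. U $$ (i,j) * H $$ (j,k) * b i)"
    by (rule sum.swap)
  also have "\<dots> = (\<Sum>j<n. \<Sum>i<n. U $$ (i,j) * b i * H $$ (j,k))"
  proof (intro sum.cong refl)
    fix j i assume "j \<in> {..<n}" "i \<in> {..<n}"
    show "U $$ (i,j) * H $$ (j,k) * b i = U $$ (i,j) * b i * H $$ (j,k)"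
      by (simp only: mult.assoc mult.commute[of "H $$ (j,k)" "b i"])
  qed
  finally show ?thesis
    by (simp add: sum_distrib_right)
qed

lemma top_eigenspace_projection:
  fixes M :: "real mat" and b :: "nat \<Rightarrow> real"
  assumes M: "M \<in> carrier_mat n n" and sym: "transpose_mat M = M" and r: "r < n"
  obtains Q where "orth_proj n r Q" "(\<Sum>i<n. \<Sum>j<n. (b i * b j) * Q $$ (i,j)) = 0"
    "r * eigenvalues_desc M ! r \<le> (\<Sum>i<n. \<Sum>j<n. M $$ (i,j) * Q $$ (i,j))"
proof -
  let ?ev = "\<lambda>i. eigenvalues_desc M ! i"
  obtain U where U: "orthonormal_mat n U" and UMU: "transpose_mat U * M * U = mat_diag n ?ev"
    and len: "length (eigenvalues_desc M) = n"
    using symmetric_spectral_decomposition[OF M sym] .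
  have top: "?ev r \<le> ?ev l" if "l \<le> r" for l
    using sorted_eigenvalues_desc[of M] that r len
    by (cases "l = r") (auto simp: sorted_wrt_iff_nth_less)
  \<comment> \<open>\<open>c\<close> holds the coordinates of the projection of \<open>b\<close> onto the top \<open>r + 1\<close> eigenvectors.\<close>
  define c where "c = vec n (\<lambda>j. if j \<le> r then (\<Sum>i<n. U $$ (i,j) * b i) else 0)"
  obtain H where H: "orthonormal_mat n H" and H_perp: "\<And>k. k < r \<Longrightarrow> (\<Sum>j<n. H $$ (j,k) * c $ j) = 0"
    and H_top: "\<And>j k. k < r \<Longrightarrow> j < n \<Longrightarrow> r < j \<Longrightarrow> H $$ (j,k) = 0"
    using orthonormal_frame_orthogonal_to[of c n r] r by (auto simp: c_def)
  have Uc: "U \<in> carrier_mat n n" and Hm: "H \<in> carrier_mat n n"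
    using U H by (auto simp: orthonormal_mat_def)
  define X where "X = U * H"
  have X: "orthonormal_mat n X"
    unfolding X_def using orthonormal_mat_mult[OF U H] .
  have Xc: "X \<in> carrier_mat n n"
    using X by (simp add: orthonormal_mat_def)
  define Q where "Q = col_proj_mat n X {..<r}"
  have "orth_proj n r Q"
    using orth_proj_col_proj_mat[OF X, of "{..<r}"] r by (simp add: Q_def)
  moreover have "(\<Sum>i<n. \<Sum>j<n. (b i * b j) * Q $$ (i,j)) = 0"
  proof -
    have "(\<Sum>i<n. X $$ (i,k) * b i) = 0" if k: "k < r" for k
    proof -
      have "(\<Sum>i<n. X $$ (i,k) * b i) = (\<Sum>j<n. (\<Sum>i<n. U $$ (i,j) * b i) * H $$ (j,k))"
        unfolding X_def using k r by (intro mult_mat_col_weighted_sum[OF Uc Hm]) simp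
      also have "\<dots> = (\<Sum>j<n. H $$ (j,k) * c $ j)"
        using H_top[OF k] by (intro sum.cong refl) (auto simp: c_def mult.commute)
      finally show ?thesis
        using H_perp[OF k] by simp
    qed
    then show ?thesis
      unfolding Q_def col_proj_mat_quadratic_form[OF finite_lessThan] by simp
  qed
  moreover have "r * ?ev r \<le> (\<Sum>i<n. \<Sum>j<n. M $$ (i,j) * Q $$ (i,j))"
  proof -
    have "?ev r \<le> (transpose_mat X * M * X) $$ (k,k)" if k: "k < r" for k
    proof -
      have "transpose_mat X * M * X = transpose_mat H * mat_diag n ?ev * H"
        unfolding X_def congruence_mult[OF Uc Hm M] UMU ..
      moreover have "?ev r \<le> ?ev l" if "l < n" "H $$ (l,k) \<noteq> 0" for l
        using top H_top k that by (meson not_le)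
      ultimately show ?thesis
        using diag_congruence_entry_ge[OF H] k r by simp
    qed
    then have "r * ?ev r \<le> (\<Sum>k<r. (transpose_mat X * M * X) $$ (k,k))"
      using sum_mono[of "{..<r}" "\<lambda>_. ?ev r"] by simp
    also have "\<dots> = (\<Sum>i<n. \<Sum>j<n. M $$ (i,j) * Q $$ (i,j))"
      using r by (simp add: Q_def col_proj_mat_frobenius[OF Xc M])
    finally show ?thesis .
  qed
  ultimately show thesis
    using that by blast
qed

lemma adj_mat_carrier: "adj_mat n E \<in> carrier_mat n n"
  by (simp add: adj_mat_def)

lemma adj_mat_symmetric:
  assumes "simple_graph n E"
  shows "transpose_mat (adj_mat n E) = adj_mat n E"
  using assms by (intro eq_matI) (auto simp: adj_mat_def simple_graph_def)

lemma simple_graph_sign_bound: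
  fixes Q :: "real mat"
  assumes G: "simple_graph n E"
  shows "2 * (\<Sum>i<n. \<Sum>j<n. adj_mat n E $$ (i,j) * Q $$ (i,j)) - (\<Sum>i<n. \<Sum>j<n. Q $$ (i,j))
    + 2 * (\<Sum>i<n. Q $$ (i,i)) \<le> (\<Sum>i<n. \<Sum>j<n. \<bar>Q $$ (i,j)\<bar>)"
proof -
  define s where "s i j = 2 * adj_mat n E $$ (i,j) - 1 + (if i = j then 2 else 0)" for i j
  \<comment> \<open>\<open>s = 2A - J + 2I\<close> is a sign matrix; on the diagonal it is \<open>1\<close> because the graph has no loops.\<close>
  have s: "s i j = 1 \<or> s i j = -1" if "i < n" "j < n" for i j
    using G that by (auto simp: s_def adj_mat_def simple_graph_def)
  have "2 * (\<Sum>i<n. \<Sum>j<n. adj_mat n E $$ (i,j) * Q $$ (i,j)) - (\<Sum>i<n. \<Sum>j<n. Q $$ (i,j))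
      + 2 * (\<Sum>i<n. Q $$ (i,i)) = (\<Sum>i<n. \<Sum>j<n. s i j * Q $$ (i,j))"
    by (simp add: s_def algebra_simps sum.distrib sum_subtractf sum_distrib_left
        if_distrib[of "\<lambda>x. x * _"] if_distrib[of "\<lambda>x. _ * x"] cong: if_cong)
  also have "\<dots> \<le> (\<Sum>i<n. \<Sum>j<n. \<bar>Q $$ (i,j)\<bar>)"
  proof (intro sum_mono)
    fix i j assume "i \<in> {..<n}" "j \<in> {..<n}"
    then show "s i j * Q $$ (i,j) \<le> \<bar>Q $$ (i,j)\<bar>"
      using s[of i j] by auto
  qed
  finally show ?thesis .
qed

theorem mainTheorem3:
  fixes r n :: nat and E :: "nat \<Rightarrow> nat \<Rightarrow> bool"
  assumes "r \<ge> 1" and "n \<ge> r + 1" and "simple_graph n E"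
  shows "eigenvalues_desc (adj_mat n E) ! r \<le> beta r / (2 * real r) * real n - 1"
proof -
  let ?\<mu> = "eigenvalues_desc (adj_mat n E) ! r"
  obtain Q where Q: "orth_proj n r Q" and Q_ones: "(\<Sum>i<n. \<Sum>j<n. Q $$ (i,j)) = 0"
    and Q_top: "r * ?\<mu> \<le> (\<Sum>i<n. \<Sum>j<n. adj_mat n E $$ (i,j) * Q $$ (i,j))"
    using top_eigenspace_projection[OF adj_mat_carrier adj_mat_symmetric[OF assms(3)], of r "\<lambda>_. 1"]
      assms(2) by auto
  have "2 * (r * ?\<mu>) + 2 * r \<le> (\<Sum>i<n. \<Sum>j<n. \<bar>Q $$ (i,j)\<bar>)"
    using simple_graph_sign_bound[OF assms(3), of Q] Q_ones Q_top trace_orth_proj[OF Q] by linarith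
  also have "\<dots> \<le> n * beta r"
    using sum_abs_orth_proj_le_beta[OF Q] .
  finally show ?thesis
    using assms(1) by (simp add: field_simps)
qed

end
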